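(* Let $\mathbb I$ be an index coding problem and let $V_1,\dots,V_n\in\mathbb F^3$ be a valid scalar linear index code of length $3$ for $\mathbb I$ over a finite field $\mathbb F$. Then for every type-2 alignment set of $\mathbb I$, with message set ${\cal W}'$ (the union of its triangular interfering sets), the vectors assigned to the messages of ${\cal W}'$ span a vector space of dimension exactly $2$.
   Context: Index coding setup: An index coding problem $\mathbb I$ over a finite field $\mathbb F$ consists of a set of messages ${\cal W}=\{W_1,\dots,W_n\}$ (each message is a symbol of $\mathbb F$ in the scalar setting), a set of receivers $[1:T]$, and for each receiver $j$ a demand set $D(j)\subseteq{\cal W}$ and a side-information set $S(j)\subseteq {\cal W}\setminus D(j)$. Every message is demanded by at least one receiver. For a receiver $j$ and $W_k\in D(j)$, the interfering set is $Interf_k(j)={\cal W}\setminus(\{W_k\}\cup S(j))$; if $W_k\notin D(j)$ then $Interf_k(j)=\emptyset$. A scalar linear index code of length $L$ over $\mathbb F$ is an assignment of vectors $V_1,\dots,V_n\in\mathbb F^L$ to the messages; the source broadcasts $\sum_{i=1}^n V_iW_i\in\mathbb F^L$, and the code is valid if every receiver $j$ can recover every message of $D(j)$ from the broadcast codeword and the messages in $S(j)$. Two distinct messages $W_i,W_k$ are in conflict if there is a receiver $j$ with $W_k\in D(j)$ and $W_i\in Interf_k(j)$, or a receiver $j$ with $W_i\in D(j)$ and $W_k\in Interf_i(j)$. A triangular interfering set is a subset ${\cal W}''\subseteq{\cal W}$ with $|{\cal W}''|=3$ such that there exist a receiver $j$ and a message $W_k\in D(j)\setminus{\cal W}''$ with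 ${\cal W}''\subseteq Interf_k(j)$, and at least two messages of ${\cal W}''$ are in conflict. Two distinct triangular interfering sets ${\cal W}_1,{\cal W}_2$ are adjacent if ${\cal W}_1\cap{\cal W}_2=\{W_a,W_b\}$ with $W_a,W_b$ in conflict. Two triangular interfering sets are connected if there is a finite sequence of triangular interfering sets starting at one and ending at the other in which consecutive sets are adjacent (every set is connected to itself). A type-2 alignment set is a maximal collection of pairwise connected triangular interfering sets (an equivalence class under connectedness); its message set is the union of its triangular interfering sets. *)

theory Defs
  imports "HOL-Analysis.Analysis"
begin

text \<open>Index coding problem: messages W_1..W_n are the indices 1..n,
receivers are 1..T, D j is the demand set and S j the side-information set of receiver j.\<close>

definition ic_problem :: "nat \<Rightarrow> nat \<Rightarrow> (nat \<Rightarrow> nat set) \<Rightarrow> (nat \<Rightarrow> nat set) \<Rightarrow> bool" where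
  "ic_problem n T D S \<longleftrightarrow>
     (\<forall>j\<in>{1..T}. D j \<subseteq> {1..n} \<and> S j \<subseteq> {1..n} - D j) \<and>
     (\<forall>k\<in>{1..n}. \<exists>j\<in>{1..T}. k \<in> D j)"

definition interf :: "nat \<Rightarrow> (nat \<Rightarrow> nat set) \<Rightarrow> (nat \<Rightarrow> nat set) \<Rightarrow> nat \<Rightarrow> nat \<Rightarrow> nat set" where
  "interf n D S k j = (if k \<in> D j then {1..n} - ({k} \<union> S j) else {})"

definition codeword :: "nat \<Rightarrow> (nat \<Rightarrow> 'f::field ^ 'L) \<Rightarrow> (nat \<Rightarrow> 'f) \<Rightarrow> 'f ^ 'L" where
  "codeword n V w = (\<Sum>i\<in>{1..n}. w i *s V i)"

definition valid_code :: "nat \<Rightarrow> nat \<Rightarrow> (nat \<Rightarrow> nat set) \<Rightarrow> (nat \<Rightarrow> nat set) \<Rightarrow>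
    (nat \<Rightarrow> 'f::field ^ 'L) \<Rightarrow> bool" where
  "valid_code n T D S V \<longleftrightarrow>
     (\<forall>j\<in>{1..T}. \<forall>k\<in>D j. \<exists>g :: 'f ^ 'L \<Rightarrow> (nat \<Rightarrow> 'f) \<Rightarrow> 'f.
        \<forall>w :: nat \<Rightarrow> 'f. g (codeword n V w) (restrict w (S j)) = w k)"

definition in_conflict :: "nat \<Rightarrow> nat \<Rightarrow> (nat \<Rightarrow> nat set) \<Rightarrow> (nat \<Rightarrow> nat set) \<Rightarrow> nat \<Rightarrow> nat \<Rightarrow> bool" where
  "in_conflict n T D S i k \<longleftrightarrow> i \<noteq> k \<and> i \<in> {1..n} \<and> k \<in> {1..n} \<and>
     (\<exists>j\<in>{1..T}. (k \<in> D j \<and> i \<in> interf n D S k j) \<or> (i \<in> D j \<and> k \<in> interf n D S i j))"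

definition triangular :: "nat \<Rightarrow> nat \<Rightarrow> (nat \<Rightarrow> nat set) \<Rightarrow> (nat \<Rightarrow> nat set) \<Rightarrow> nat set \<Rightarrow> bool" where
  "triangular n T D S A \<longleftrightarrow> A \<subseteq> {1..n} \<and> card A = 3 \<and>
     (\<exists>j\<in>{1..T}. \<exists>k\<in>D j - A. A \<subseteq> interf n D S k j) \<and>
     (\<exists>a\<in>A. \<exists>b\<in>A. in_conflict n T D S a b)"

definition tri_adjacent :: "nat \<Rightarrow> nat \<Rightarrow> (nat \<Rightarrow> nat set) \<Rightarrow> (nat \<Rightarrow> nat set) \<Rightarrow> nat set \<Rightarrow> nat set \<Rightarrow> bool" where
  "tri_adjacent n T D S A B \<longleftrightarrow> triangular n T D S A \<and> triangular n T D S B \<and> A \<noteq> B \<and>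
     (\<exists>a b. A \<inter> B = {a, b} \<and> in_conflict n T D S a b)"

definition tri_connected :: "nat \<Rightarrow> nat \<Rightarrow> (nat \<Rightarrow> nat set) \<Rightarrow> (nat \<Rightarrow> nat set) \<Rightarrow> nat set \<Rightarrow> nat set \<Rightarrow> bool" where
  "tri_connected n T D S A B \<longleftrightarrow> triangular n T D S A \<and> triangular n T D S B \<and>
     (tri_adjacent n T D S)\<^sup>*\<^sup>* A B"

definition type2_alignment_set :: "nat \<Rightarrow> nat \<Rightarrow> (nat \<Rightarrow> nat set) \<Rightarrow> (nat \<Rightarrow> nat set) \<Rightarrow> nat set set \<Rightarrow> bool" where
  "type2_alignment_set n T D S C \<longleftrightarrow>
     (\<exists>A. triangular n T D S A \<and> C = {B. tri_connected n T D S A B})"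

end

theory Submission
  imports Defs
begin

text \<open>A demanded message cannot lie in the span of its interfering messages: otherwise a
combination of messages that vanishes on the side information and has a nonzero entry at
the demanded message would be broadcast as the zero codeword. Hence two conflicting messages
get independent vectors, and the three vectors of a triangular interfering set span a proper
subspace of \<open>\<bbbF>\<^sup>3\<close> containing two independent vectors, i.e. a plane. Adjacent triangular
sets share two conflicting messages, so they span the same plane, and by connectedness the
whole alignment set spans that plane.\<close>

lemma span_image_obtain_sum:
  fixes V :: "nat \<Rightarrow> 'f::field ^ 'L"
  assumes "x \<in> vec.span (V ` I)" and "finite J" and "I \<subseteq> J"
  obtains c where "\<forall>i. i \<notin> I \<longrightarrow> c i = 0" and "x = (\<Sum>i\<in>J. c i *s V i)"
proof -
  from assms(1) have "\<exists>c. (\<forall>i. i \<notin> I \<longrightarrow> c i = 0) \<and> x = (\<Sum>i\<in>J. c i *s V i)"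
  proof (induction rule: vec.span_induct_alt)
    case base
    show ?case by (intro exI[of _ "\<lambda>_. 0"]) simp
  next
    case (step a v y)
    then obtain i0 c where i0: "i0 \<in> I" "v = V i0"
      and c: "\<forall>i. i \<notin> I \<longrightarrow> c i = 0" "y = (\<Sum>i\<in>J. c i *s V i)" by blast
    have "(\<Sum>i\<in>J. (if i = i0 then a else 0) *s V i) = (\<Sum>i\<in>J. if i = i0 then a *s V i0 else 0)"
      by (rule sum.cong) auto
    also have "\<dots> = a *s v"
      using i0 assms(2,3) by auto
    finally have "a *s v + y = (\<Sum>i\<in>J. (if i = i0 then a else 0) *s V i + c i *s V i)"
      using c(2) by (simp add: sum.distrib)
    also have "\<dots> = (\<Sum>i\<in>J. ((if i = i0 then a else 0) + c i) *s V i)"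
      by (simp add: vector_sadd_rdistrib)
    finally show ?case
      using i0 c(1) by (intro exI[of _ "\<lambda>i. (if i = i0 then a else 0) + c i"]) auto
  qed
  with that show ?thesis by blast
qed

lemma valid_code_decodes:
  assumes "valid_code n T D S V" and "j \<in> {1..T}" and "k \<in> D j"
    and "codeword n V w = codeword n V w'" and "restrict w (S j) = restrict w' (S j)"
  shows "w k = w' k"
proof -
  obtain g where "\<forall>w. g (codeword n V w) (restrict w (S j)) = w k"
    using assms(1-3) unfolding valid_code_def by blast
  then show ?thesis using assms(4,5) by metis
qed

lemma demand_notin_span_interf:
  fixes V :: "nat \<Rightarrow> 'f::field ^ 'L"
  assumes ic: "ic_problem n T D S" and vc: "valid_code n T D S V"
    and j: "j \<in> {1..T}" and k: "k \<in> D j"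
  shows "V k \<notin> vec.span (V ` interf n D S k j)"
proof
  let ?I = "interf n D S k j"
  have I: "?I = {1..n} - ({k} \<union> S j)" using k by (simp add: interf_def)
  have kn: "k \<in> {1..n}" and Sj: "S j \<inter> D j = {}"
    using ic j k unfolding ic_problem_def by blast+
  assume "V k \<in> vec.span (V ` ?I)"
  then obtain c where c0: "\<forall>i. i \<notin> ?I \<longrightarrow> c i = 0" and c: "V k = (\<Sum>i\<in>{1..n}. c i *s V i)"
    by (rule span_image_obtain_sum[where J = "{1..n}"]) (auto simp: I)
  define w where "w i = (if i = k then 1 else 0) - c i" for i
  have "codeword n V w = (\<Sum>i\<in>{1..n}. (if i = k then 1 else 0) *s V i) - (\<Sum>i\<in>{1..n}. c i *s V i)"
    unfolding codeword_def w_def by (simp add: vector_sub_rdistrib sum_subtractf)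
  also have "(\<Sum>i\<in>{1..n}. (if i = k then 1 else 0) *s V i) = (\<Sum>i\<in>{1..n}. if i = k then V k else 0)"
    by (rule sum.cong) auto
  also have "\<dots> - (\<Sum>i\<in>{1..n}. c i *s V i) = codeword n V (\<lambda>_. 0)"
    using c kn by (simp add: codeword_def)
  finally have "codeword n V w = codeword n V (\<lambda>_. 0)" .
  moreover have "restrict w (S j) = restrict (\<lambda>_. 0) (S j)"
    unfolding restrict_def w_def using c0 Sj k I by (intro ext) auto
  ultimately have "w k = 0"
    using valid_code_decodes[OF vc j k, of w "\<lambda>_. 0"] by simp
  moreover have "w k = 1" using c0 I by (simp add: w_def)
  ultimately show False by simp
qed

lemma valid_code_nonzero:
  fixes V :: "nat \<Rightarrow> 'f::field ^ 'L"
  assumes ic: "ic_problem n T D S" and vc: "valid_code n T D S V" and a: "a \<in> {1..n}"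
  shows "V a \<noteq> 0"
proof -
  obtain j where "j \<in> {1..T}" "a \<in> D j" using ic a unfolding ic_problem_def by blast
  from demand_notin_span_interf[OF ic vc this] show ?thesis
    by (metis vec.span_zero)
qed

lemma in_conflict_dim_eq_2:
  fixes V :: "nat \<Rightarrow> 'f::field ^ 'L"
  assumes ic: "ic_problem n T D S" and vc: "valid_code n T D S V"
    and "in_conflict n T D S a b"
  shows "vec.dim {V a, V b} = 2"
proof -
  have dim_pair: "vec.dim {V y, V x} = 2"
    if "x \<in> {1..n}" "j \<in> {1..T}" "y \<in> D j" "x \<in> interf n D S y j" for x y j
  proof -
    have "vec.span {V x} \<subseteq> vec.span (V ` interf n D S y j)"
      using that(4) by (intro vec.span_mono) simp
    then have "V y \<notin> vec.span {V x}"
      using demand_notin_span_interf[OF ic vc that(2,3)] by blast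
    then show ?thesis
      using valid_code_nonzero[OF ic vc that(1)] by (simp add: vec.dim_insert)
  qed
  obtain j where "a \<in> {1..n}" "b \<in> {1..n}" "j \<in> {1..T}"
    and "b \<in> D j \<and> a \<in> interf n D S b j \<or> a \<in> D j \<and> b \<in> interf n D S a j"
    using assms(3) unfolding in_conflict_def by blast
  then show ?thesis
    using dim_pair by (metis insert_commute)
qed

lemma vec_dim_less_card_if_notin_span:
  fixes S :: "('f::field ^ 'L) set"
  assumes "x \<notin> vec.span S"
  shows "vec.dim S < CARD('L)"
  using dim_subset_UNIV_cart_gen[of "insert x S"] assms by (simp add: vec.dim_insert)

lemma triangular_dim_eq_2:
  fixes V :: "nat \<Rightarrow> 'f::field ^ 3"
  assumes ic: "ic_problem n T D S" and vc: "valid_code n T D S V"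
    and tr: "triangular n T D S A"
  shows "vec.dim (V ` A) = 2"
proof -
  obtain j k where j: "j \<in> {1..T}" and k: "k \<in> D j" and sub: "A \<subseteq> interf n D S k j"
    using tr unfolding triangular_def by blast
  have "vec.span (V ` A) \<subseteq> vec.span (V ` interf n D S k j)"
    using sub by (intro vec.span_mono image_mono)
  then have "V k \<notin> vec.span (V ` A)"
    using demand_notin_span_interf[OF ic vc j k] by blast
  then have less3: "vec.dim (V ` A) < CARD(3)"
    by (rule vec_dim_less_card_if_notin_span)
  obtain a b where "a \<in> A" "b \<in> A" and ab: "in_conflict n T D S a b"
    using tr unfolding triangular_def by blast
  then have "vec.dim {V a, V b} \<le> vec.dim (V ` A)"
    by (intro vec.dim_subset) auto
  then have "2 \<le> vec.dim (V ` A)"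
    using in_conflict_dim_eq_2[OF ic vc ab] by simp
  with less3 show ?thesis by simp
qed

lemma tri_adjacent_span_eq:
  fixes V :: "nat \<Rightarrow> 'f::field ^ 3"
  assumes ic: "ic_problem n T D S" and vc: "valid_code n T D S V"
    and "tri_adjacent n T D S A B"
  shows "vec.span (V ` A) = vec.span (V ` B)"
proof -
  obtain a b where tr: "triangular n T D S A" "triangular n T D S B"
    and ab: "A \<inter> B = {a, b}" "in_conflict n T D S a b"
    using assms(3) unfolding tri_adjacent_def by blast
  have "vec.span {V a, V b} = vec.span (V ` X)" if "triangular n T D S X" "{a, b} \<subseteq> X" for X
    using that triangular_dim_eq_2[OF ic vc] in_conflict_dim_eq_2[OF ic vc ab(2)]
    by (intro vec.dim_eq_span) auto
  then show ?thesis
    using tr ab(1) by (metis inf.cobounded1 inf.cobounded2)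
qed

lemma tri_adjacent_rtranclp_span_eq:
  fixes V :: "nat \<Rightarrow> 'f::field ^ 3"
  assumes ic: "ic_problem n T D S" and vc: "valid_code n T D S V"
    and "(tri_adjacent n T D S)\<^sup>*\<^sup>* A B"
  shows "vec.span (V ` B) = vec.span (V ` A)"
  using assms(3)
  by (induction rule: rtranclp_induct) (simp_all add: tri_adjacent_span_eq[OF ic vc])

theorem theorem4:
  fixes n T :: nat and D S :: "nat \<Rightarrow> nat set" and V :: "nat \<Rightarrow> 'f::{finite,field} ^ 3"
    and C :: "nat set set"
  assumes "ic_problem n T D S"
    and "valid_code n T D S V"
    and "type2_alignment_set n T D S C"
  shows "vec.dim (V ` (\<Union>C)) = 2"
proof -
  obtain A where A: "triangular n T D S A" and C: "C = {B. tri_connected n T D S A B}"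
    using assms(3) unfolding type2_alignment_set_def by blast
  have span_C: "vec.span (V ` B) = vec.span (V ` A)" if "B \<in> C" for B
    using that tri_adjacent_rtranclp_span_eq[OF assms(1,2)] by (simp add: C tri_connected_def)
  have "A \<in> C" using A by (simp add: C tri_connected_def)
  then have "V ` (\<Union>C) \<subseteq> vec.span (V ` A)" and "V ` A \<subseteq> V ` (\<Union>C)"
    using span_C vec.span_superset by blast+
  then have "vec.span (V ` (\<Union>C)) = vec.span (V ` A)"
    by (meson vec.span_eq vec.span_mono vec.span_superset subset_trans)
  then show ?thesis
    using triangular_dim_eq_2[OF assms(1,2) A] vec.span_eq_dim by metis
qed

end
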